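(* Let $\Gamma$ be a finite simple undirected graph with at least one edge, whose automorphism group $G$ acts primitively on the vertex set, and let $r$ be the chromatic number of $\Gamma$. Then $\Gamma$ does not contain a subgraph isomorphic to the complete graph on $r+1$ vertices with one edge removed.
   Context: A permutation group is primitive if it is transitive and preserves no equivalence relation other than equality and the universal relation. *)

theory Defs
  imports Main
begin

definition simple_graph :: "'a set \<Rightarrow> ('a \<Rightarrow> 'a \<Rightarrow> bool) \<Rightarrow> bool" where
  "simple_graph V E \<longleftrightarrow> finite V \<and>
     (\<forall>x y. E x y \<longrightarrow> x \<in> V \<and> y \<in> V) \<and>
     (\<forall>x y. E x y \<longrightarrow> E y x) \<and> (\<forall>x. \<not> E x x)"

definition has_edge :: "'a set \<Rightarrow> ('a \<Rightarrow> 'a \<Rightarrow> bool) \<Rightarrow> bool" where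
  "has_edge V E \<longleftrightarrow> (\<exists>x\<in>V. \<exists>y\<in>V. E x y)"

definition graph_aut :: "'a set \<Rightarrow> ('a \<Rightarrow> 'a \<Rightarrow> bool) \<Rightarrow> ('a \<Rightarrow> 'a) set" where
  "graph_aut V E = {f. bij_betw f V V \<and> (\<forall>x\<in>V. \<forall>y\<in>V. E (f x) (f y) \<longleftrightarrow> E x y)}"

definition primitive_on :: "('a \<Rightarrow> 'a) set \<Rightarrow> 'a set \<Rightarrow> bool" where
  "primitive_on G V \<longleftrightarrow>
     (\<forall>x\<in>V. \<forall>y\<in>V. \<exists>g\<in>G. g x = y) \<and>
     (\<forall>R. equiv V R \<longrightarrow> (\<forall>g\<in>G. \<forall>(x,y)\<in>R. (g x, g y) \<in> R) \<longrightarrow>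
          R = Id_on V \<or> R = V \<times> V)"

definition proper_colouring :: "'a set \<Rightarrow> ('a \<Rightarrow> 'a \<Rightarrow> bool) \<Rightarrow> nat \<Rightarrow> ('a \<Rightarrow> nat) \<Rightarrow> bool" where
  "proper_colouring V E k c \<longleftrightarrow> (\<forall>v\<in>V. c v < k) \<and>
     (\<forall>x\<in>V. \<forall>y\<in>V. E x y \<longrightarrow> c x \<noteq> c y)"

definition chromatic_number :: "'a set \<Rightarrow> ('a \<Rightarrow> 'a \<Rightarrow> bool) \<Rightarrow> nat" where
  "chromatic_number V E = (LEAST k. \<exists>c. proper_colouring V E k c)"

text \<open>The graph contains a (not necessarily induced) subgraph isomorphic to the complete
  graph on the n vertices {0..<n} with the edge {0,1} removed: an injective map of
  {0..<n} into V sending every other pair of distinct indices to an edge.\<close>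
definition contains_Kn_minus_edge :: "'a set \<Rightarrow> ('a \<Rightarrow> 'a \<Rightarrow> bool) \<Rightarrow> nat \<Rightarrow> bool" where
  "contains_Kn_minus_edge V E n \<longleftrightarrow> (\<exists>\<phi>. inj_on \<phi> {0..<n} \<and> \<phi> ` {0..<n} \<subseteq> V \<and>
     (\<forall>i<n. \<forall>j<n. i \<noteq> j \<and> {i, j} \<noteq> {0, 1} \<longrightarrow> E (\<phi> i) (\<phi> j)))"

end

theory Submission
  imports Defs
begin

text \<open>Call two vertices colour-equivalent if every proper colouring with r colours (r the
  chromatic number) gives them the same colour. This is an equivalence relation preserved by
  all automorphisms, so by primitivity it is equality or universal; it is not universal because
  the ends of an edge are coloured differently. In a copy of the complete graph on r + 1
  vertices minus an edge, the other r - 1 vertices use up all but one colour, so the two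
  non-adjacent vertices get that colour and are distinct but colour-equivalent.\<close>

definition colour_equivalent :: "'a set \<Rightarrow> ('a \<Rightarrow> 'a \<Rightarrow> bool) \<Rightarrow> nat \<Rightarrow> 'a rel" where
  "colour_equivalent V E k =
     {(x, y). x \<in> V \<and> y \<in> V \<and> (\<forall>c. proper_colouring V E k c \<longrightarrow> c x = c y)}"

lemma proper_colouring_chromatic_number:
  assumes "simple_graph V E"
  shows "\<exists>c. proper_colouring V E (chromatic_number V E) c"
proof -
  have "finite V"
    using assms by (simp add: simple_graph_def)
  then obtain h where h: "bij_betw h V {0..<card V}"
    using ex_bij_betw_finite_nat by blast
  have "h x \<noteq> h y" if "E x y" for x y
  proof
    assume "h x = h y"
    moreover have "x \<in> V" "y \<in> V"
      using assms that by (auto simp: simple_graph_def)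
    ultimately have "x = y"
      using h by (simp add: bij_betw_def inj_on_def)
    then show False
      using assms that by (simp add: simple_graph_def)
  qed
  moreover have "\<forall>v\<in>V. h v < card V"
    using bij_betwE[OF h] by simp
  ultimately have "proper_colouring V E (card V) h"
    unfolding proper_colouring_def by blast
  then have "\<exists>c. proper_colouring V E (card V) c" by blast
  then show ?thesis
    unfolding chromatic_number_def by (rule LeastI)
qed

lemma proper_colouring_comp_aut:
  assumes "proper_colouring V E k c" and "g \<in> graph_aut V E"
  shows "proper_colouring V E k (c \<circ> g)"
proof -
  have "g ` V = V" and "\<forall>x\<in>V. \<forall>y\<in>V. E (g x) (g y) \<longleftrightarrow> E x y"
    using assms(2) by (auto simp: graph_aut_def bij_betw_def)
  then show ?thesis
    using assms(1) unfolding proper_colouring_def by (metis comp_apply image_eqI)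
qed

lemma equiv_colour_equivalent: "equiv V (colour_equivalent V E k)"
  unfolding colour_equivalent_def equiv_def refl_on_def sym_def trans_def by auto

lemma colour_equivalent_aut_invariant:
  assumes "g \<in> graph_aut V E" and "(x, y) \<in> colour_equivalent V E k"
  shows "(g x, g y) \<in> colour_equivalent V E k"
proof -
  have "g x \<in> V" "g y \<in> V"
    using assms by (auto simp: graph_aut_def bij_betw_def colour_equivalent_def)
  moreover have "c (g x) = c (g y)" if "proper_colouring V E k c" for c
    using proper_colouring_comp_aut[OF that assms(1)] assms(2)
    by (auto simp: colour_equivalent_def)
  ultimately show ?thesis
    by (simp add: colour_equivalent_def)
qed

lemma colour_equivalent_eq_Id_on:
  assumes "primitive_on (graph_aut V E) V" and "has_edge V E"
    and "proper_colouring V E k c"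
  shows "colour_equivalent V E k = Id_on V"
proof -
  have "\<forall>g\<in>graph_aut V E. \<forall>(x, y)\<in>colour_equivalent V E k. (g x, g y) \<in> colour_equivalent V E k"
    using colour_equivalent_aut_invariant by auto
  then have "colour_equivalent V E k = Id_on V \<or> colour_equivalent V E k = V \<times> V"
    using assms(1) unfolding primitive_on_def
    by (blast intro: equiv_colour_equivalent[of V E k])
  moreover obtain a b where ab: "a \<in> V" "b \<in> V" "E a b"
    using assms(2) by (auto simp: has_edge_def)
  moreover have "(a, b) \<notin> colour_equivalent V E k"
    using ab assms(3) by (auto simp: colour_equivalent_def proper_colouring_def)
  ultimately show ?thesis
    by auto
qed

lemma K_minus_edge_ends_same_colour:
  assumes c: "proper_colouring V E k c"
    and sub: "\<phi> ` {0..<k+1} \<subseteq> V"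
    and edges: "\<forall>i<k+1. \<forall>j<k+1. i \<noteq> j \<and> {i, j} \<noteq> {0, 1} \<longrightarrow> E (\<phi> i) (\<phi> j)"
  shows "c (\<phi> 0) = c (\<phi> 1)"
proof -
  have in_V: "\<phi> i \<in> V" if "i < k+1" for i
    using sub that by auto
  have colour_lt: "c (\<phi> i) < k" if "i < k+1" for i
    using c in_V[OF that] by (simp add: proper_colouring_def)
  have differ: "c (\<phi> i) \<noteq> c (\<phi> j)" if "i < k+1" "j < k+1" "i \<noteq> j" "2 \<le> j" for i j
  proof -
    have "E (\<phi> i) (\<phi> j)"
      using edges that by (auto simp: doubleton_eq_iff)
    then show ?thesis
      using c in_V that(1,2) by (simp add: proper_colouring_def)
  qed
  have "k \<ge> 1"
    using colour_lt[of 0] by simp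
  define C where "C = (c \<circ> \<phi>) ` {2..<k+1}"
  have "inj_on (c \<circ> \<phi>) {2..<k+1}"
    using differ by (intro inj_onI) (metis atLeastLessThan_iff comp_apply)
  then have "card C = k - 1"
    using card_image by (fastforce simp: C_def)
  moreover have "C \<subseteq> {0..<k}"
    using colour_lt by (auto simp: C_def)
  ultimately have "card ({0..<k} - C) = 1"
    using \<open>k \<ge> 1\<close> by (simp add: card_Diff_subset finite_subset)
  then obtain m where m: "{0..<k} - C = {m}"
    by (rule card_1_singletonE)
  have missing_colour: "c (\<phi> i) \<in> {0..<k} - C" if "i < 2" for i
  proof -
    have "c (\<phi> i) \<noteq> c (\<phi> j)" if "j \<in> {2..<k+1}" for j
      using differ \<open>i < 2\<close> \<open>k \<ge> 1\<close> that by simp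
    then have "c (\<phi> i) \<notin> C"
      unfolding C_def by (metis comp_apply imageE)
    moreover have "c (\<phi> i) < k"
      using colour_lt \<open>i < 2\<close> \<open>k \<ge> 1\<close> by simp
    ultimately show ?thesis
      by simp
  qed
  show ?thesis
    using missing_colour[of 0] missing_colour[of 1] m by simp
qed

theorem lemma8:
  fixes V :: "'a set" and E :: "'a \<Rightarrow> 'a \<Rightarrow> bool"
  assumes "simple_graph V E"
    and "has_edge V E"
    and "primitive_on (graph_aut V E) V"
  shows "\<not> contains_Kn_minus_edge V E (chromatic_number V E + 1)"
proof
  define r where "r = chromatic_number V E"
  assume "contains_Kn_minus_edge V E (chromatic_number V E + 1)"
  then obtain \<phi> where inj: "inj_on \<phi> {0..<r+1}" and sub: "\<phi> ` {0..<r+1} \<subseteq> V"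
    and edges: "\<forall>i<r+1. \<forall>j<r+1. i \<noteq> j \<and> {i, j} \<noteq> {0, 1} \<longrightarrow> E (\<phi> i) (\<phi> j)"
    unfolding contains_Kn_minus_edge_def r_def by (elim exE conjE)
  obtain c where c: "proper_colouring V E r c"
    using proper_colouring_chromatic_number[OF assms(1)] r_def by blast
  have "\<phi> 0 \<in> V"
    using sub by auto
  then have "c (\<phi> 0) < r"
    using c by (simp add: proper_colouring_def)
  then have "r \<ge> 1"
    by simp
  have "(\<phi> 0, \<phi> 1) \<in> colour_equivalent V E r"
    using K_minus_edge_ends_same_colour[OF _ sub edges] sub \<open>r \<ge> 1\<close>
    by (auto simp: colour_equivalent_def)
  moreover have "\<phi> 0 \<noteq> \<phi> 1"
    using inj_onD[OF inj, of 0 1] \<open>r \<ge> 1\<close> by auto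
  ultimately show False
    using colour_equivalent_eq_Id_on[OF assms(3,2) c] by auto
qed

end
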